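(* Fix $c=2$. For any $\mathcal{E}\in[0,1]$ and any real $v\in H^2(\mathbb{R})$, $$\langle K_-(2)v,v\rangle_{L^2}=\|L_-v\|^2_{L^2}+\|u_0v_x-u_0'v\|^2_{L^2}.$$
   Context: For $\mathcal{E}\in(0,1)$, $u_0(x)=\sqrt{1-\mathcal{E}}\,\mathrm{sn}\big(x\sqrt{(1+\mathcal{E})/2},\,k\big)$ with $k=\sqrt{(1-\mathcal{E})/(1+\mathcal{E})}$ (Jacobi elliptic function of modulus $k$); for $\mathcal{E}=0$, $u_0(x)=\tanh(x/\sqrt2)$ (black soliton); for $\mathcal{E}=1$, $u_0\equiv0$. In all cases $u_0$ is real, $u_0''+(1-u_0^2)u_0=0$ and $(u_0')^2=\frac12[(1-u_0^2)^2-\mathcal{E}^2]$. Define $L_-v=-v''+(u_0^2-1)v$, $M_-v=v''''-3(u_0^2v')'+(u_0^2-1)v$, and $K_-(c)=M_--cL_-$. The quadratic form is $\langle K_-(2)v,v\rangle_{L^2}=\int_{\mathbb{R}}[v_{xx}^2+3u_0^2v_x^2+(u_0^2-1)v^2]\,dx-2\int_{\mathbb{R}}[v_x^2+(u_0^2-1)v^2]\,dx$. *)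

theory Defs
  imports "HOL-Analysis.Analysis"
begin

definition ellipticF :: "real \<Rightarrow> real \<Rightarrow> real" where
  "ellipticF k \<phi> =
     (if 0 \<le> \<phi> then integral {0..\<phi>} (\<lambda>\<theta>. 1 / sqrt (1 - k\<^sup>2 * (sin \<theta>)\<^sup>2))
      else - integral {\<phi>..0} (\<lambda>\<theta>. 1 / sqrt (1 - k\<^sup>2 * (sin \<theta>)\<^sup>2)))"

text \<open>Jacobi amplitude am(x,k): the inverse of phi |-> F(phi,k) (well defined for 0 <= k < 1).\<close>
definition jacobi_am :: "real \<Rightarrow> real \<Rightarrow> real" where
  "jacobi_am k x = (THE \<phi>. ellipticF k \<phi> = x)"

definition jacobi_sn :: "real \<Rightarrow> real \<Rightarrow> real" where
  "jacobi_sn k x = sin (jacobi_am k x)"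

text \<open>The periodic wave / black soliton / zero solution u_0, parametrised by E in [0,1].\<close>
definition u0 :: "real \<Rightarrow> real \<Rightarrow> real" where
  "u0 E x =
     (if E = 0 then tanh (x / sqrt 2)
      else if E = 1 then 0
      else sqrt (1 - E) *
           jacobi_sn (sqrt ((1 - E) / (1 + E))) (x * sqrt ((1 + E) / 2)))"

definition sq_integrable :: "(real \<Rightarrow> real) \<Rightarrow> bool" where
  "sq_integrable f \<longleftrightarrow> f \<in> borel_measurable lborel \<and> integrable lborel (\<lambda>x. (f x)\<^sup>2)"

text \<open>v is (the continuous representative of) an element of H^2(R) with first derivative v1
  (continuous representative) and second weak derivative v2:
  v, v1, v2 in L^2, v(b)-v(a) = int_a^b v1, v1(b)-v1(a) = int_a^b v2.\<close>
definition H2_with_derivs :: "(real \<Rightarrow> real) \<Rightarrow> (real \<Rightarrow> real) \<Rightarrow> (real \<Rightarrow> real) \<Rightarrow> bool" where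
  "H2_with_derivs v v1 v2 \<longleftrightarrow>
     sq_integrable v \<and> sq_integrable v1 \<and> sq_integrable v2 \<and>
     (\<forall>a b. a \<le> b \<longrightarrow> (v1 has_integral (v b - v a)) {a..b}
                      \<and> (v2 has_integral (v1 b - v1 a)) {a..b})"

end

theory Submission
  imports Defs
begin

text \<open>Put \<open>P = 2 (u\<^sup>2 - 1) v\<close> and \<open>Q = - u u' v\<^sup>2\<close>. Expanding the squares, the difference of the
  two sides of the identity is, pointwise, \<open>P v\<^sub>x\<^sub>x + P' v\<^sub>x + Q'\<close>, the weak derivative of
  \<open>P v\<^sub>x + Q\<close>; this uses only \<open>u'' = (u\<^sup>2 - 1) u\<close>. As \<open>v \<in> H\<^sup>2\<close> and \<open>u, u'\<close> are bounded,
  \<open>P v\<^sub>x + Q\<close> and its weak derivative are integrable, so the integral of the derivative vanishes.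
  The equation for \<open>u\<^sub>0\<close> is checked directly for \<open>tanh\<close> and for the rescaled \<open>sn\<close>, whose
  amplitude is differentiated as the inverse of the elliptic integral \<open>F\<close>.\<close>

section \<open>Integrals of derivatives on the line\<close>

lemma integrable_tendsto_at_top_imp_zero:
  fixes h :: "real \<Rightarrow> real"
  assumes int: "integrable lborel h" and lim: "(h \<longlongrightarrow> L) at_top"
  shows "L = 0"
proof (rule ccontr)
  assume "L \<noteq> 0"
  then have pos: "\<bar>L\<bar>/2 > 0" by simp
  from lim have "eventually (\<lambda>x. dist (h x) L < \<bar>L\<bar>/2) at_top"
    using pos tendstoD by blast
  then obtain M where M: "\<And>x. x \<ge> M \<Longrightarrow> dist (h x) L < \<bar>L\<bar>/2"
    by (auto simp: eventually_at_top_linorder)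
  have "integrable lborel (\<lambda>x. (\<bar>L\<bar>/2) * indicator {M..} x)"
  proof (rule Bochner_Integration.integrable_bound[OF int])
    show "AE x in lborel. norm (\<bar>L\<bar> / 2 * indicator {M..} x :: real) \<le> norm (h x)"
    proof (rule AE_I2)
      fix x
      show "norm (\<bar>L\<bar> / 2 * indicator {M..} x :: real) \<le> norm (h x)"
        using M[of x] by (cases "M \<le> x") (auto simp: dist_real_def indicator_def abs_if split: if_splits)
    qed
  qed simp
  then have "integrable lborel (\<lambda>x. (2/\<bar>L\<bar>) * ((\<bar>L\<bar>/2) * indicator {M..} x))"
    by (rule integrable_mult_right)
  then have "integrable lborel (indicator {M..} :: real \<Rightarrow> real)"
    using pos by simp
  then have "emeasure lborel {M..} < \<infinity>"
    by (simp add: integrable_indicator_iff)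
  moreover have "emeasure lborel {M..M + measure lborel {M..} + 1} \<le> emeasure lborel {M..}"
    by (rule emeasure_mono) auto
  ultimately show False
    by (simp add: emeasure_eq_ennreal_measure)
qed

lemma integrable_tendsto_at_bot_imp_zero:
  fixes h :: "real \<Rightarrow> real"
  assumes "integrable lborel h" and "(h \<longlongrightarrow> L) at_bot"
  shows "L = 0"
proof (rule integrable_tendsto_at_top_imp_zero)
  show "integrable lborel (\<lambda>x. h (- x))"
    using lborel_integrable_real_affine_iff[of "-1" h 0] assms(1) by simp
  show "((\<lambda>x. h (- x)) \<longlongrightarrow> L) at_top"
    using assms(2) by (simp add: filterlim_at_bot_mirror)
qed

text \<open>Integrability of \<open>D\<close> gives \<open>h\<close> limits at \<open>\<plusminus>\<infinity>\<close>; integrability of \<open>h\<close> forces them to be \<open>0\<close>.\<close>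
lemma integral_eq_zero_if_integrable_primitive:
  fixes h D :: "real \<Rightarrow> real"
  assumes inth: "integrable lborel h" and intD: "integrable lborel D"
    and ftc: "\<And>a b. a \<le> b \<Longrightarrow> (\<integral>x. D x * indicator {a..b} x \<partial>lborel) = h b - h a"
  shows "(\<integral>x. D x \<partial>lborel) = 0"
proof -
  have si: "set_integrable lborel A D" if "A \<in> sets lborel" for A
    unfolding set_integrable_def using integrable_mult_indicator[OF that intD] .
  have Icc: "(LINT x:{a..b}|lborel. D x) = h b - h a" if "a \<le> b" for a b
    using ftc[OF that] by (simp add: set_lebesgue_integral_def mult.commute)
  define Ip where "Ip = (LINT x:{0..}|lborel. D x)"
  define Im where "Im = (LINT x:{..0}|lborel. D x)"
  have "((\<lambda>b. h 0 + (LINT x:{0..b}|lborel. D x)) \<longlongrightarrow> h 0 + Ip) at_top"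
    unfolding Ip_def by (intro tendsto_intros tendsto_set_lebesgue_integral_at_top) (auto intro: si)
  then have "(h \<longlongrightarrow> h 0 + Ip) at_top"
    by (rule Lim_transform_eventually)
      (use eventually_ge_at_top[of "0::real"] in \<open>eventually_elim, simp add: Icc\<close>)
  then have top: "h 0 + Ip = 0"
    by (rule integrable_tendsto_at_top_imp_zero[OF inth])
  have "((\<lambda>a. h 0 - (LINT x:{a..0}|lborel. D x)) \<longlongrightarrow> h 0 - Im) at_bot"
    unfolding Im_def by (intro tendsto_intros tendsto_set_lebesgue_integral_at_bot) (auto intro: si)
  then have "(h \<longlongrightarrow> h 0 - Im) at_bot"
    by (rule Lim_transform_eventually)
      (use eventually_le_at_bot[of "0::real"] in \<open>eventually_elim, simp add: Icc\<close>)
  then have bot: "h 0 - Im = 0"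
    by (rule integrable_tendsto_at_bot_imp_zero[OF inth])
  have "(\<integral>x. D x \<partial>lborel) = (\<integral>x. indicator {0..} x * D x + indicator {..<0} x * D x \<partial>lborel)"
    by (intro Bochner_Integration.integral_cong) (auto simp: indicator_def)
  also have "\<dots> = Ip + (LINT x:{..<0}|lborel. D x)"
    using si[of "{0..}"] si[of "{..<0}"]
    by (simp add: Ip_def set_lebesgue_integral_def set_integrable_def)
  also have "(LINT x:{..<0}|lborel. D x) = Im"
    unfolding Im_def using AE_lborel_singleton[of 0] borel_measurable_integrable[OF intD]
    by (intro set_integral_cong_set) (auto simp: set_borel_measurable_def elim!: eventually_mono)
  finally show ?thesis using top bot by simp
qed

section \<open>Square-integrable functions and \<open>H\<^sup>2\<close>\<close>

lemma sq_integrable_imp_integrable_Icc: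
  assumes "sq_integrable f"
  shows "integrable lborel (\<lambda>x. f x * indicator {s..t} x)"
proof (rule Bochner_Integration.integrable_bound[of _ "\<lambda>x. (f x)\<^sup>2 + indicator {s..t} x"])
  have [measurable]: "f \<in> borel_measurable lborel"
    using assms by (simp add: sq_integrable_def)
  show "integrable lborel (\<lambda>x. (f x)\<^sup>2 + indicator {s..t} x)"
    using assms unfolding sq_integrable_def
    by (intro Bochner_Integration.integrable_add) (auto intro!: integrable_real_indicator simp: emeasure_lborel_Icc_eq)
  have "\<bar>y\<bar> \<le> y\<^sup>2 + 1" for y :: real
  proof (cases "\<bar>y\<bar> \<le> 1")
    case False
    then have "\<bar>y\<bar> * 1 \<le> \<bar>y\<bar> * \<bar>y\<bar>"
      by (intro mult_left_mono) auto
    then show ?thesis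
      by (simp add: power2_eq_square)
  qed (smt (verit) zero_le_power2)
  then show "AE x in lborel. norm (f x * indicator {s..t} x) \<le> norm ((f x)\<^sup>2 + indicator {s..t} x)"
    by (intro AE_I2) (auto simp: indicator_def)
  show "(\<lambda>x. f x * indicator {s..t} x) \<in> borel_measurable lborel"
    by measurable
qed

lemma integrable_bounded_mult_sq_integrable:
  fixes c f g :: "real \<Rightarrow> real"
  assumes [measurable]: "c \<in> borel_measurable lborel" and "bounded (range c)"
    and f: "sq_integrable f" and g: "sq_integrable g"
  shows "integrable lborel (\<lambda>x. c x * (f x * g x))"
proof -
  obtain K where K: "\<And>x. \<bar>c x\<bar> \<le> K"
    using assms(2) by (auto simp: bounded_iff)
  have [measurable]: "f \<in> borel_measurable lborel" "g \<in> borel_measurable lborel"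
    using f g by (auto simp: sq_integrable_def)
  show ?thesis
  proof (rule Bochner_Integration.integrable_bound[of _ "\<lambda>x. K * ((f x)\<^sup>2 + (g x)\<^sup>2)"])
    show "integrable lborel (\<lambda>x. K * ((f x)\<^sup>2 + (g x)\<^sup>2))"
      using f g unfolding sq_integrable_def by (intro integrable_mult_right Bochner_Integration.integrable_add) auto
    show "AE x in lborel. norm (c x * (f x * g x)) \<le> norm (K * ((f x)\<^sup>2 + (g x)\<^sup>2))"
    proof (rule AE_I2)
      fix x
      have "2 * \<bar>f x\<bar> * \<bar>g x\<bar> \<le> (f x)\<^sup>2 + (g x)\<^sup>2"
        using sum_squares_bound[of "\<bar>f x\<bar>" "\<bar>g x\<bar>"] by simp
      moreover have "0 \<le> \<bar>f x\<bar> * \<bar>g x\<bar>"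
        by simp
      ultimately have "\<bar>f x * g x\<bar> \<le> (f x)\<^sup>2 + (g x)\<^sup>2"
        unfolding abs_mult by linarith
      then have "\<bar>c x\<bar> * \<bar>f x * g x\<bar> \<le> K * ((f x)\<^sup>2 + (g x)\<^sup>2)"
        using K[of x] by (intro mult_mono) auto
      then show "norm (c x * (f x * g x)) \<le> norm (K * ((f x)\<^sup>2 + (g x)\<^sup>2))"
        using order.trans[OF abs_ge_zero K[of x]] by (simp add: abs_mult)
    qed
  qed measurable
qed

lemma H2_with_derivs_integral_Icc:
  assumes "H2_with_derivs v v1 v2"
  shows "integrable lborel (\<lambda>x. v2 x * indicator {s..t} x)"
    and "s \<le> t \<Longrightarrow> (\<integral>x. v2 x * indicator {s..t} x \<partial>lborel) = v1 t - v1 s"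
proof -
  have sq: "sq_integrable v2" and ftc: "s \<le> t \<Longrightarrow> (v2 has_integral (v1 t - v1 s)) {s..t}"
    using assms unfolding H2_with_derivs_def by auto
  show int: "integrable lborel (\<lambda>x. v2 x * indicator {s..t} x)"
    by (rule sq_integrable_imp_integrable_Icc[OF sq])
  assume "s \<le> t"
  have si: "set_integrable lborel {s..t} v2"
    using int by (simp add: set_integrable_def mult.commute)
  have "(\<integral>x. v2 x * indicator {s..t} x \<partial>lborel) = (LINT x:{s..t}|lborel. v2 x)"
    by (simp add: set_lebesgue_integral_def mult.commute)
  also have "\<dots> = integral {s..t} v2"
    by (rule set_borel_integral_eq_integral(2)[OF si])
  also have "\<dots> = v1 t - v1 s"
    using ftc[OF \<open>s \<le> t\<close>] by (rule integral_unique)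
  finally show "(\<integral>x. v2 x * indicator {s..t} x \<partial>lborel) = v1 t - v1 s" .
qed

lemma has_real_derivative_if_has_integral_Icc:
  fixes f g :: "real \<Rightarrow> real"
  assumes ftc: "\<And>a b. a \<le> b \<Longrightarrow> (g has_integral (f b - f a)) {a..b}"
  shows "continuous_on UNIV f"
    and "continuous_on UNIV g \<Longrightarrow> (f has_real_derivative g x) (at x)"
proof -
  have local: "f y = f a + integral {a..y} g" if "a \<le> y" for a y
    using integral_unique[OF ftc[OF that]] by simp
  have "continuous_on {x - 1..x + 1} (\<lambda>y. f (x - 1) + integral {x - 1..y} g)" for x
    using ftc[of "x - 1" "x + 1"]
    by (intro continuous_intros indefinite_integral_continuous_1) (auto simp: has_integral_integrable)
  moreover have "f y = f (x - 1) + integral {x - 1..y} g" if "y \<in> {x - 1..x + 1}" for x y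
    using that by (intro local) simp
  ultimately have cont: "continuous_on {x - 1..x + 1} f" for x
    by (metis (no_types, lifting) continuous_on_cong)
  have "isCont f x" for x
    using continuous_on_interior[OF cont[of x]] by simp
  then show "continuous_on UNIV f"
    by (simp add: continuous_at_imp_continuous_on)
  assume "continuous_on UNIV g"
  then have "((\<lambda>y. integral {x - 1..y} g) has_vector_derivative g x) (at x within {x - 1<..<x + 1})"
    by (intro has_vector_derivative_within_subset[OF integral_has_vector_derivative[of "x - 1" "x + 1"]])
      (auto intro: continuous_on_subset)
  then have "((\<lambda>y. f (x - 1) + integral {x - 1..y} g) has_real_derivative g x) (at x)"
    by (subst (asm) has_vector_derivative_within_open)
      (auto intro!: derivative_eq_intros simp: has_real_derivative_iff_has_vector_derivative)
  then show "(f has_real_derivative g x) (at x)"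
  proof (rule has_field_derivative_transform_within_open)
    show "f (x - 1) + integral {x - 1..y} g = f y" if "y \<in> {x - 1<..<x + 1}" for y
      using that by (intro local[symmetric]) simp
  qed auto
qed

lemma H2_with_derivs_continuous:
  assumes "H2_with_derivs v v1 v2"
  shows "continuous_on UNIV v1" and "(v has_real_derivative v1 x) (at x)"
proof -
  have "\<And>a b. a \<le> b \<Longrightarrow> (v1 has_integral (v b - v a)) {a..b}"
    and "\<And>a b. a \<le> b \<Longrightarrow> (v2 has_integral (v1 b - v1 a)) {a..b}"
    using assms unfolding H2_with_derivs_def by auto
  then show "continuous_on UNIV v1" and "(v has_real_derivative v1 x) (at x)"
    using has_real_derivative_if_has_integral_Icc by blast+
qed

lemma integrable_Icc_triangle:
  fixes G H :: "real \<Rightarrow> real"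
  assumes ab: "a \<le> b"
    and [measurable]: "G \<in> borel_measurable lborel" "H \<in> borel_measurable lborel"
    and G: "integrable lborel (\<lambda>x. G x * indicator {a..b} x)"
    and H: "\<And>t. t \<in> {a..b} \<Longrightarrow> \<bar>H t\<bar> \<le> C"
  shows "integrable (lborel \<Otimes>\<^sub>M lborel) (\<lambda>(x, t). G x * indicator {a..b} x * (H t * indicator {x..b} t))"
proof -
  define f where "f x t = G x * indicator {a..b} x * (H t * indicator {x..b} t)" for x t
  define g where "g x t = \<bar>G x\<bar> * indicator {a..b} x * (C * indicator {a..b} t)" for x t
  have gm: "case_prod g \<in> borel_measurable (lborel \<Otimes>\<^sub>M lborel)"
    unfolding g_def split_beta' by measurable
  have Gabs: "integrable lborel (\<lambda>x. \<bar>G x\<bar> * indicator {a..b} x)"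
    using integrable_abs[OF G] by (simp add: abs_mult)
  have "integrable (lborel \<Otimes>\<^sub>M lborel) (case_prod g)"
  proof (rule lborel_pair.Fubini_integrable[OF gm])
    have "C \<ge> 0"
      using H[of a] ab by simp
    then have "(\<lambda>x. \<integral>t. norm (g x t) \<partial>lborel) = (\<lambda>x. (C * (b - a)) * (\<bar>G x\<bar> * indicator {a..b} x))"
      using ab by (auto simp: g_def abs_mult)
    then show "integrable lborel (\<lambda>x. \<integral>t. norm (case_prod g (x, t)) \<partial>lborel)"
      using Gabs by simp
    show "AE x in lborel. integrable lborel (\<lambda>t. case_prod g (x, t))"
      by (intro AE_I2) (auto simp: g_def intro!: integrable_real_indicator simp: emeasure_lborel_Icc_eq)
  qed
  moreover have "case_prod f \<in> borel_measurable (lborel \<Otimes>\<^sub>M lborel)"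
    unfolding f_def split_beta' indicator_def atLeastAtMost_iff by measurable
  ultimately have "integrable (lborel \<Otimes>\<^sub>M lborel) (case_prod f)"
  proof (rule Bochner_Integration.integrable_bound, intro AE_I2, clarify)
    fix x t
    show "norm (f x t) \<le> norm (g x t)"
    proof (cases "x \<in> {a..b} \<and> t \<in> {x..b}")
      case True
      then have "\<bar>H t\<bar> \<le> C" by (intro H) auto
      with True show ?thesis
        by (auto simp: f_def g_def abs_mult mult_left_mono)
    qed (auto simp: f_def g_def)
  qed
  then show ?thesis
    by (simp add: f_def[abs_def])
qed

lemma integral_Icc_triangle_swap:
  fixes G H :: "real \<Rightarrow> real"
  assumes "a \<le> b"
    and "G \<in> borel_measurable lborel" "H \<in> borel_measurable lborel"
    and "integrable lborel (\<lambda>x. G x * indicator {a..b} x)"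
    and "\<And>t. t \<in> {a..b} \<Longrightarrow> \<bar>H t\<bar> \<le> C"
  shows "integrable lborel (\<lambda>x. G x * indicator {a..b} x * (\<integral>t. H t * indicator {x..b} t \<partial>lborel))"
    and "(\<integral>x. G x * indicator {a..b} x * (\<integral>t. H t * indicator {x..b} t \<partial>lborel) \<partial>lborel)
       = (\<integral>t. H t * indicator {a..b} t * (\<integral>x. G x * indicator {a..t} x \<partial>lborel) \<partial>lborel)"
proof -
  define f where "f x t = G x * indicator {a..b} x * (H t * indicator {x..b} t)" for x t
  have f_int: "integrable (lborel \<Otimes>\<^sub>M lborel) (case_prod f)"
    unfolding f_def[abs_def] by (rule integrable_Icc_triangle[OF assms])
  have inner_t: "(\<integral>t. f x t \<partial>lborel) = G x * indicator {a..b} x * (\<integral>t. H t * indicator {x..b} t \<partial>lborel)" for x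
    unfolding f_def by (rule integral_mult_right_zero)
  show "integrable lborel (\<lambda>x. G x * indicator {a..b} x * (\<integral>t. H t * indicator {x..b} t \<partial>lborel))"
    using lborel_pair.integrable_fst'[OF f_int] by (simp add: inner_t)
  have "f x t = H t * indicator {a..b} t * (G x * indicator {a..t} x)" for x t
    by (auto simp: f_def indicator_def)
  then have "(\<integral>x. f x t \<partial>lborel) = H t * indicator {a..b} t * (\<integral>x. G x * indicator {a..t} x \<partial>lborel)" for t
    by simp
  with inner_t show "(\<integral>x. G x * indicator {a..b} x * (\<integral>t. H t * indicator {x..b} t \<partial>lborel) \<partial>lborel)
       = (\<integral>t. H t * indicator {a..b} t * (\<integral>x. G x * indicator {a..t} x \<partial>lborel) \<partial>lborel)"
    using lborel_pair.Fubini_integral[OF f_int] by simp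
qed

text \<open>\<open>v\<^sub>1\<close> is merely absolutely continuous, so the rule is obtained by writing
  \<open>F x = F b - \<integral>\<^sub>x\<^sup>b F'\<close> and swapping the order of integration.\<close>
lemma integration_by_parts_weak:
  fixes F F' v1 v2 :: "real \<Rightarrow> real"
  assumes ab: "a \<le> b"
    and F: "\<And>x. (F has_real_derivative F' x) (at x)" and cF': "continuous_on UNIV F'"
    and cv1: "continuous_on UNIV v1"
    and v2_meas [measurable]: "v2 \<in> borel_measurable lborel"
    and v2_int: "\<And>s t. integrable lborel (\<lambda>x. v2 x * indicator {s..t} x)"
    and v2_ftc: "\<And>s t. s \<le> t \<Longrightarrow> (\<integral>x. v2 x * indicator {s..t} x \<partial>lborel) = v1 t - v1 s"
  shows "(\<integral>x. F x * v2 x * indicator {a..b} x \<partial>lborel)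
          = F b * v1 b - F a * v1 a - (\<integral>x. F' x * v1 x * indicator {a..b} x \<partial>lborel)"
proof -
  have F'_meas [measurable]: "F' \<in> borel_measurable lborel"
    using borel_measurable_continuous_onI[OF cF'] by simp
  have FTC: "(\<integral>t. F' t * indicator {s..t'} t \<partial>lborel) = F t' - F s" if "s \<le> t'" for s t'
    using that F cF' by (intro integral_FTC_Icc_real) (auto simp: continuous_on_eq_continuous_at)
  have "bounded (F' ` {a..b})"
    by (intro compact_imp_bounded compact_continuous_image continuous_on_subset[OF cF']) auto
  then obtain C where C: "\<And>t. t \<in> {a..b} \<Longrightarrow> \<bar>F' t\<bar> \<le> C"
    unfolding bounded_iff by fastforce
  have F'v1_int: "integrable lborel (\<lambda>x. F' x * v1 x * indicator {a..b} x)"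
    using cF' cv1 by (intro borel_integrable_atLeastAtMost)
      (auto simp: continuous_on_eq_continuous_at intro!: continuous_intros)
  have F'_int: "integrable lborel (\<lambda>x. F' x * indicator {a..b} x)"
    using cF' by (intro borel_integrable_atLeastAtMost) (auto simp: continuous_on_eq_continuous_at)
  note swap = integral_Icc_triangle_swap[OF ab v2_meas F'_meas v2_int C]
  have "F x * v2 x * indicator {a..b} x
      = F b * (v2 x * indicator {a..b} x) - v2 x * indicator {a..b} x * (\<integral>t. F' t * indicator {x..b} t \<partial>lborel)" for x
    by (cases "x \<in> {a..b}") (auto simp: FTC algebra_simps)
  then have "(\<integral>x. F x * v2 x * indicator {a..b} x \<partial>lborel)
      = F b * (v1 b - v1 a) - (\<integral>x. v2 x * indicator {a..b} x * (\<integral>t. F' t * indicator {x..b} t \<partial>lborel) \<partial>lborel)"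
    by (simp only: Bochner_Integration.integral_diff[OF integrable_mult_right[OF v2_int] swap(1)]
        integral_mult_right_zero v2_ftc[OF ab])
  also have "(\<integral>x. v2 x * indicator {a..b} x * (\<integral>t. F' t * indicator {x..b} t \<partial>lborel) \<partial>lborel)
      = (\<integral>t. F' t * indicator {a..b} t * (\<integral>x. v2 x * indicator {a..t} x \<partial>lborel) \<partial>lborel)"
    by (rule swap(2))
  also have "\<dots> = (\<integral>t. F' t * v1 t * indicator {a..b} t - v1 a * (F' t * indicator {a..b} t) \<partial>lborel)"
    by (intro Bochner_Integration.integral_cong) (auto simp: v2_ftc algebra_simps split: split_indicator)
  also have "\<dots> = (\<integral>t. F' t * v1 t * indicator {a..b} t \<partial>lborel) - v1 a * (F b - F a)"
    by (simp only: Bochner_Integration.integral_diff[OF F'v1_int integrable_mult_right[OF F'_int]]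
        integral_mult_right_zero FTC[OF ab])
  finally show ?thesis
    by (simp add: algebra_simps)
qed

lemma integral_H2_total_derivative_eq_zero:
  fixes P P' Q Q' :: "real \<Rightarrow> real"
  assumes H: "H2_with_derivs v v1 v2"
    and P: "\<And>x. (P has_real_derivative P' x) (at x)" and cP': "continuous_on UNIV P'"
    and Q: "\<And>x. (Q has_real_derivative Q' x) (at x)" and cQ': "continuous_on UNIV Q'"
    and h_int: "integrable lborel (\<lambda>x. P x * v1 x + Q x)"
    and D_int: "integrable lborel (\<lambda>x. P x * v2 x + P' x * v1 x + Q' x)"
  shows "(\<integral>x. P x * v2 x + P' x * v1 x + Q' x \<partial>lborel) = 0"
proof (rule integral_eq_zero_if_integrable_primitive[OF h_int D_int])
  fix a b :: real
  assume ab: "a \<le> b"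
  have cv1: "continuous_on UNIV v1"
    using H2_with_derivs_continuous(1)[OF H] .
  have v2_meas: "v2 \<in> borel_measurable lborel"
    using H by (simp add: H2_with_derivs_def sq_integrable_def)
  have parts: "(\<integral>x. P x * v2 x * indicator {a..b} x \<partial>lborel)
      = P b * v1 b - P a * v1 a - (\<integral>x. P' x * v1 x * indicator {a..b} x \<partial>lborel)"
    by (rule integration_by_parts_weak[OF ab P cP' cv1 v2_meas H2_with_derivs_integral_Icc[OF H]])
  have ftc: "(\<integral>x. Q' x * indicator {a..b} x \<partial>lborel) = Q b - Q a"
    using Q cQ' by (intro integral_FTC_Icc_real[OF ab]) (auto simp: continuous_on_eq_continuous_at)
  have i1: "integrable lborel (\<lambda>x. P' x * v1 x * indicator {a..b} x)"
    using cP' cv1 by (intro borel_integrable_atLeastAtMost)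
      (auto simp: continuous_on_eq_continuous_at intro!: continuous_intros)
  have i2: "integrable lborel (\<lambda>x. Q' x * indicator {a..b} x)"
    using cQ' by (intro borel_integrable_atLeastAtMost) (auto simp: continuous_on_eq_continuous_at)
  have iD: "integrable lborel (\<lambda>x. (P x * v2 x + P' x * v1 x + Q' x) * indicator {a..b} x)"
    using D_int by (rule integrable_real_mult_indicator[rotated]) simp
  have "integrable lborel (\<lambda>x. (P x * v2 x + P' x * v1 x + Q' x) * indicator {a..b} x
        - (P' x * v1 x * indicator {a..b} x + Q' x * indicator {a..b} x))"
    using iD i1 i2 by simp
  then have i0: "integrable lborel (\<lambda>x. P x * v2 x * indicator {a..b} x)"
    by (simp add: algebra_simps)
  have "(\<integral>x. (P x * v2 x + P' x * v1 x + Q' x) * indicator {a..b} x \<partial>lborel)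
      = (\<integral>x. P x * v2 x * indicator {a..b} x + (P' x * v1 x * indicator {a..b} x
           + Q' x * indicator {a..b} x) \<partial>lborel)"
    by (simp add: algebra_simps)
  also have "\<dots> = (\<integral>x. P x * v2 x * indicator {a..b} x \<partial>lborel)
      + ((\<integral>x. P' x * v1 x * indicator {a..b} x \<partial>lborel) + (\<integral>x. Q' x * indicator {a..b} x \<partial>lborel))"
    using i0 i1 i2 by simp
  also have "\<dots> = (P b * v1 b + Q b) - (P a * v1 a + Q a)"
    unfolding parts ftc by simp
  finally show "(\<integral>x. (P x * v2 x + P' x * v1 x + Q' x) * indicator {a..b} x \<partial>lborel)
      = (P b * v1 b + Q b) - (P a * v1 a + Q a)" .
qed

section \<open>The quadratic form \<open>\<langle>K\<^sub>-(2) v, v\<rangle>\<close>\<close>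

definition bounded_wave_profile :: "(real \<Rightarrow> real) \<Rightarrow> (real \<Rightarrow> real) \<Rightarrow> bool" where
  "bounded_wave_profile u u' \<longleftrightarrow>
     (\<forall>x. (u has_real_derivative u' x) (at x)) \<and>
     (\<forall>x. (u' has_real_derivative ((u x)\<^sup>2 - 1) * u x) (at x)) \<and>
     bounded (range u) \<and> bounded (range u')"

lemma bounded_range_mult:
  fixes f g :: "'a \<Rightarrow> real"
  assumes "bounded (range f)" and "bounded (range g)"
  shows "bounded (range (\<lambda>x. f x * g x))"
proof -
  obtain B C where "\<And>x. \<bar>f x\<bar> \<le> B" and "\<And>x. \<bar>g x\<bar> \<le> C"
    using assms by (auto simp: bounded_iff)
  then have "\<bar>f x * g x\<bar> \<le> B * C" for x
    by (simp add: abs_mult mult_mono')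
  then show ?thesis
    by (auto simp: bounded_iff)
qed

lemmas bounded_range_intros =
  bounded_range_mult bounded_plus_comp bounded_minus_comp uminus_bounded_comp[THEN iffD2]

lemma bounded_wave_profile_integrable_quadratic:
  assumes u: "bounded_wave_profile u u'" and H: "H2_with_derivs v v1 v2"
  shows "integrable lborel (\<lambda>x. (v2 x)\<^sup>2 + 3 * (u x)\<^sup>2 * (v1 x)\<^sup>2 + ((u x)\<^sup>2 - 1) * (v x)\<^sup>2)"
    and "integrable lborel (\<lambda>x. (v1 x)\<^sup>2 + ((u x)\<^sup>2 - 1) * (v x)\<^sup>2)"
    and "integrable lborel (\<lambda>x. (- v2 x + ((u x)\<^sup>2 - 1) * v x)\<^sup>2)"
    and "integrable lborel (\<lambda>x. (u x * v1 x - u' x * v x)\<^sup>2)"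
    and "integrable lborel (\<lambda>x. 2 * ((u x)\<^sup>2 - 1) * v x * v1 x - u x * u' x * (v x)\<^sup>2)"
proof -
  have du: "\<And>x. (u has_real_derivative u' x) (at x)"
    and du': "\<And>x. (u' has_real_derivative ((u x)\<^sup>2 - 1) * u x) (at x)"
    and bu: "bounded (range u)" and bu': "bounded (range u')"
    using u by (auto simp: bounded_wave_profile_def)
  have sv: "sq_integrable v" and sv1: "sq_integrable v1" and sv2: "sq_integrable v2"
    using H by (auto simp: H2_with_derivs_def)
  have "continuous_on UNIV u" and "continuous_on UNIV u'"
    using du du' by (meson DERIV_isCont continuous_at_imp_continuous_on)+
  then have [measurable]: "u \<in> borel_measurable lborel" "u' \<in> borel_measurable lborel"
    using borel_measurable_continuous_onI by simp_all
  have bounded_const: "bounded (range (\<lambda>x::real. c))" for c :: real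
    by simp
  note int = Bochner_Integration.integrable_add integrable_bounded_mult_sq_integrable
  note bdd = bounded_range_intros bounded_const bu bu'
  have "integrable lborel (\<lambda>x. (\<lambda>x. 1) x * (v2 x * v2 x) + ((\<lambda>x. 3 * (u x * u x)) x * (v1 x * v1 x)
          + (\<lambda>x. u x * u x - 1) x * (v x * v x)))"
    by (intro int sv sv1 sv2 bdd) measurable
  then show "integrable lborel (\<lambda>x. (v2 x)\<^sup>2 + 3 * (u x)\<^sup>2 * (v1 x)\<^sup>2 + ((u x)\<^sup>2 - 1) * (v x)\<^sup>2)"
    by (simp add: power2_eq_square algebra_simps)
  have "integrable lborel (\<lambda>x. (\<lambda>x. 1) x * (v1 x * v1 x) + (\<lambda>x. u x * u x - 1) x * (v x * v x))"
    by (intro int sv sv1 bdd) measurable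
  then show "integrable lborel (\<lambda>x. (v1 x)\<^sup>2 + ((u x)\<^sup>2 - 1) * (v x)\<^sup>2)"
    by (simp add: power2_eq_square algebra_simps)
  have "integrable lborel (\<lambda>x. (\<lambda>x. 1) x * (v2 x * v2 x) + ((\<lambda>x. -2 * (u x * u x - 1)) x * (v x * v2 x)
          + (\<lambda>x. (u x * u x - 1) * (u x * u x - 1)) x * (v x * v x)))"
    by (intro int sv sv2 bdd) measurable
  then show "integrable lborel (\<lambda>x. (- v2 x + ((u x)\<^sup>2 - 1) * v x)\<^sup>2)"
    by (simp add: power2_eq_square algebra_simps)
  have "integrable lborel (\<lambda>x. (\<lambda>x. u x * u x) x * (v1 x * v1 x) + ((\<lambda>x. -2 * (u x * u' x)) x * (v x * v1 x)
          + (\<lambda>x. u' x * u' x) x * (v x * v x)))"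
    by (intro int sv sv1 bdd) measurable
  then show "integrable lborel (\<lambda>x. (u x * v1 x - u' x * v x)\<^sup>2)"
    by (simp add: power2_eq_square algebra_simps)
  have "integrable lborel (\<lambda>x. (\<lambda>x. 2 * (u x * u x - 1)) x * (v x * v1 x) + (\<lambda>x. - (u x * u' x)) x * (v x * v x))"
    by (intro int sv sv1 bdd) measurable
  then show "integrable lborel (\<lambda>x. 2 * ((u x)\<^sup>2 - 1) * v x * v1 x - u x * u' x * (v x)\<^sup>2)"
    by (simp add: power2_eq_square algebra_simps)
qed

lemma quadratic_form_K_minus_2_eq:
  assumes u: "bounded_wave_profile u u'" and H: "H2_with_derivs v v1 v2"
  shows "(\<integral>x. (v2 x)\<^sup>2 + 3 * (u x)\<^sup>2 * (v1 x)\<^sup>2 + ((u x)\<^sup>2 - 1) * (v x)\<^sup>2 \<partial>lborel)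
         - 2 * (\<integral>x. (v1 x)\<^sup>2 + ((u x)\<^sup>2 - 1) * (v x)\<^sup>2 \<partial>lborel)
       = (\<integral>x. (- v2 x + ((u x)\<^sup>2 - 1) * v x)\<^sup>2 \<partial>lborel)
         + (\<integral>x. (u x * v1 x - u' x * v x)\<^sup>2 \<partial>lborel)"
proof -
  have du: "\<And>x. (u has_real_derivative u' x) (at x)"
    and du': "\<And>x. (u' has_real_derivative ((u x)\<^sup>2 - 1) * u x) (at x)"
    using u by (auto simp: bounded_wave_profile_def)
  have dv: "\<And>x. (v has_real_derivative v1 x) (at x)" and cv1: "continuous_on UNIV v1"
    using H2_with_derivs_continuous[OF H] by auto
  have cu: "continuous_on UNIV u" and cu': "continuous_on UNIV u'" and cv: "continuous_on UNIV v"
    using du du' dv by (meson DERIV_isCont continuous_at_imp_continuous_on)+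
  define A where "A x = (v2 x)\<^sup>2 + 3 * (u x)\<^sup>2 * (v1 x)\<^sup>2 + ((u x)\<^sup>2 - 1) * (v x)\<^sup>2" for x
  define B where "B x = (v1 x)\<^sup>2 + ((u x)\<^sup>2 - 1) * (v x)\<^sup>2" for x
  define C where "C x = (- v2 x + ((u x)\<^sup>2 - 1) * v x)\<^sup>2" for x
  define E where "E x = (u x * v1 x - u' x * v x)\<^sup>2" for x
  define P where "P x = 2 * ((u x)\<^sup>2 - 1) * v x" for x
  define P' where "P' x = 4 * u x * u' x * v x + 2 * ((u x)\<^sup>2 - 1) * v1 x" for x
  define Q where "Q x = - u x * u' x * (v x)\<^sup>2" for x
  define Q' where "Q' x = - ((u' x)\<^sup>2 + (u x)\<^sup>2 * ((u x)\<^sup>2 - 1)) * (v x)\<^sup>2 - 2 * u x * u' x * v x * v1 x" for x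
  have dP: "(P has_real_derivative P' x) (at x)" for x
    unfolding P_def[abs_def] by (rule derivative_eq_intros du dv refl)+ (simp add: P'_def algebra_simps)
  have dQ: "(Q has_real_derivative Q' x) (at x)" for x
    unfolding Q_def[abs_def]
    by (rule derivative_eq_intros du du' dv refl)+ (simp add: Q'_def algebra_simps power2_eq_square)
  have cP': "continuous_on UNIV P'"
    unfolding P'_def[abs_def] using cu cu' cv cv1 by (intro continuous_intros)
  have cQ': "continuous_on UNIV Q'"
    unfolding Q'_def[abs_def] using cu cu' cv cv1 by (intro continuous_intros)
  have pointwise: "A x - 2 * B x - C x - E x = P x * v2 x + P' x * v1 x + Q' x" for x
    unfolding A_def B_def C_def E_def P_def P'_def Q'_def by algebra
  note integrable = bounded_wave_profile_integrable_quadratic[OF u H]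
  have iA: "integrable lborel A" and iB: "integrable lborel B"
    and iC: "integrable lborel C" and iE: "integrable lborel E"
    unfolding A_def[abs_def] B_def[abs_def] C_def[abs_def] E_def[abs_def] by (fact integrable)+
  have ih: "integrable lborel (\<lambda>x. P x * v1 x + Q x)"
    using integrable(5) by (simp add: P_def Q_def algebra_simps)
  have "integrable lborel (\<lambda>x. A x - 2 * B x - C x - E x)"
    using iA iB iC iE by (intro Bochner_Integration.integrable_diff integrable_mult_right)
  then have "(\<integral>x. A x - 2 * B x - C x - E x \<partial>lborel) = 0"
    unfolding pointwise by (rule integral_H2_total_derivative_eq_zero[OF H dP cP' dQ cQ' ih])
  then have "(\<integral>x. A x \<partial>lborel) - 2 * (\<integral>x. B x \<partial>lborel) = (\<integral>x. C x \<partial>lborel) + (\<integral>x. E x \<partial>lborel)"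
    using iA iB iC iE by simp
  then show ?thesis
    by (simp add: A_def B_def C_def E_def)
qed

section \<open>The profiles \<open>u\<^sub>0\<close>\<close>

lemma bounded_wave_profile_tanh:
  "bounded_wave_profile (\<lambda>x. tanh (x / sqrt 2)) (\<lambda>x. (1 - (tanh (x / sqrt 2))\<^sup>2) / sqrt 2)"
proof -
  have cosh_nz: "cosh (y::real) \<noteq> 0" for y
    using cosh_real_pos[of y] by simp
  have tanh_bound: "\<bar>tanh (y::real)\<bar> \<le> 1" for y
    using tanh_real_lt_1[of y] tanh_real_gt_neg1[of y] by simp
  have d: "((\<lambda>x. tanh (x / sqrt 2)) has_real_derivative (1 - (tanh (x / sqrt 2))\<^sup>2) / sqrt 2) (at x)" for x
    by (rule derivative_eq_intros cosh_nz refl | simp)+ (simp add: field_simps)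
  have d': "((\<lambda>x. (1 - (tanh (x / sqrt 2))\<^sup>2) / sqrt 2) has_real_derivative
      ((tanh (x / sqrt 2))\<^sup>2 - 1) * tanh (x / sqrt 2)) (at x)" for x
    by (rule derivative_eq_intros cosh_nz refl | simp)+
      (simp add: field_simps power2_eq_square, simp flip: mult.assoc)
  have deriv_bound: "\<bar>(1 - (tanh y)\<^sup>2) / sqrt 2\<bar> \<le> 1" for y :: real
  proof -
    have nonneg: "0 \<le> 1 - (tanh y)\<^sup>2" and "1 - (tanh y)\<^sup>2 \<le> 1"
      using tanh_bound[of y] by (simp_all add: abs_square_le_1)
    moreover have "1 \<le> sqrt (2::real)"
      by simp
    ultimately have "1 - (tanh y)\<^sup>2 \<le> sqrt 2"
      by linarith
    then show ?thesis
      using nonneg by (simp add: divide_le_eq)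
  qed
  have "bounded (range (\<lambda>x. (1 - (tanh (x / sqrt 2))\<^sup>2) / sqrt 2))"
    using deriv_bound by (intro boundedI[of _ 1]) auto
  moreover have "bounded (range (\<lambda>x. tanh (x / sqrt 2)))"
    using tanh_bound by (intro boundedI[of _ 1]) auto
  ultimately show ?thesis
    using d d' unfolding bounded_wave_profile_def by blast
qed

definition elliptic_integrand :: "real \<Rightarrow> real \<Rightarrow> real" where
  "elliptic_integrand k \<theta> = 1 / sqrt (1 - k\<^sup>2 * (sin \<theta>)\<^sup>2)"

context
  fixes k :: real
  assumes k: "k\<^sup>2 < 1"
begin

lemma elliptic_radicand_pos: "0 < 1 - k\<^sup>2 * (sin \<theta>)\<^sup>2"
proof -
  have "k\<^sup>2 * (sin \<theta>)\<^sup>2 \<le> k\<^sup>2"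
    by (rule mult_left_le) (simp_all add: abs_square_le_1)
  then show ?thesis
    using k by linarith
qed

lemma continuous_on_elliptic_integrand: "continuous_on S (elliptic_integrand k)"
proof -
  have "sqrt (1 - k\<^sup>2 * (sin \<theta>)\<^sup>2) \<noteq> 0" for \<theta>
    using elliptic_radicand_pos[of \<theta>] by simp
  then show ?thesis
    unfolding elliptic_integrand_def[abs_def] by (intro continuous_intros) auto
qed

lemma elliptic_integrand_ge_1: "1 \<le> elliptic_integrand k \<theta>"
  using elliptic_radicand_pos[of \<theta>] by (simp add: elliptic_integrand_def le_divide_eq)

lemma ellipticF_eq_integral_from:
  assumes "-R \<le> \<phi>" "\<phi> \<le> R"
  shows "ellipticF k \<phi> = integral {-R..\<phi>} (elliptic_integrand k) - integral {-R..0} (elliptic_integrand k)"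
proof -
  have int: "elliptic_integrand k integrable_on {a..b}" for a b
    by (rule integrable_continuous_interval[OF continuous_on_elliptic_integrand])
  have F: "ellipticF k \<phi> = (if 0 \<le> \<phi> then integral {0..\<phi>} (elliptic_integrand k)
      else - integral {\<phi>..0} (elliptic_integrand k))"
    unfolding ellipticF_def elliptic_integrand_def[abs_def] by simp
  show ?thesis
  proof (cases "0 \<le> \<phi>")
    case True
    have "integral {-R..0} (elliptic_integrand k) + integral {0..\<phi>} (elliptic_integrand k)
        = integral {-R..\<phi>} (elliptic_integrand k)"
      using assms True int by (intro Henstock_Kurzweil_Integration.integral_combine) auto
    then show ?thesis
      using True F by simp
  next
    case False
    have "integral {-R..\<phi>} (elliptic_integrand k) + integral {\<phi>..0} (elliptic_integrand k)
        = integral {-R..0} (elliptic_integrand k)"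
      using assms False int by (intro Henstock_Kurzweil_Integration.integral_combine) auto
    then show ?thesis
      using False F by simp
  qed
qed

lemma has_real_derivative_ellipticF:
  "(ellipticF k has_real_derivative elliptic_integrand k \<phi>) (at \<phi>)"
proof -
  define R where "R = \<bar>\<phi>\<bar> + 1"
  have "((\<lambda>y. integral {-R..y} (elliptic_integrand k)) has_vector_derivative elliptic_integrand k \<phi>)
      (at \<phi> within {-R<..<R})"
    by (intro has_vector_derivative_within_subset[OF integral_has_vector_derivative[of "-R" R]]
        continuous_on_elliptic_integrand) (auto simp: R_def)
  then have "((\<lambda>y. integral {-R..y} (elliptic_integrand k) - integral {-R..0} (elliptic_integrand k))
      has_real_derivative elliptic_integrand k \<phi>) (at \<phi>)"
    by (subst (asm) has_vector_derivative_within_open)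
      (auto intro!: derivative_eq_intros simp: has_real_derivative_iff_has_vector_derivative R_def)
  then show ?thesis
  proof (rule has_field_derivative_transform_within_open)
    show "integral {-R..y} (elliptic_integrand k) - integral {-R..0} (elliptic_integrand k) = ellipticF k y"
      if "y \<in> {-R<..<R}" for y
      using that by (intro ellipticF_eq_integral_from[symmetric]) auto
  qed (auto simp: R_def)
qed

lemma isCont_ellipticF: "isCont (ellipticF k) \<phi>"
  using has_real_derivative_ellipticF by (rule DERIV_isCont)

lemma ellipticF_minus_id_mono: "a \<le> b \<Longrightarrow> ellipticF k a - a \<le> ellipticF k b - b"
  by (rule DERIV_nonneg_imp_nondecreasing[of a b "\<lambda>x. ellipticF k x - x"])
    (use DERIV_diff[OF has_real_derivative_ellipticF DERIV_ident] elliptic_integrand_ge_1 in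
      \<open>auto intro!: exI[of _ "elliptic_integrand k _ - 1"]\<close>)

lemma ellipticF_less: "a < b \<Longrightarrow> ellipticF k a < ellipticF k b"
  by (rule DERIV_pos_imp_increasing[of a b "ellipticF k"])
    (use has_real_derivative_ellipticF elliptic_integrand_ge_1 less_le_trans[OF zero_less_one] in
      \<open>auto intro!: exI[of _ "elliptic_integrand k _"]\<close>)

lemma ex1_ellipticF_eq: "\<exists>!\<phi>. ellipticF k \<phi> = y"
proof (rule ex_ex1I)
  have F0: "ellipticF k 0 = 0"
    by (simp add: ellipticF_def)
  show "\<exists>\<phi>. ellipticF k \<phi> = y"
  proof -
    have "\<exists>\<phi>. -\<bar>y\<bar> \<le> \<phi> \<and> \<phi> \<le> \<bar>y\<bar> \<and> ellipticF k \<phi> = y"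
    proof (rule IVT')
      show "ellipticF k (- \<bar>y\<bar>) \<le> y" and "y \<le> ellipticF k \<bar>y\<bar>"
        using ellipticF_minus_id_mono[of "-\<bar>y\<bar>" 0] ellipticF_minus_id_mono[of 0 "\<bar>y\<bar>"] F0 by auto
      show "continuous_on {- \<bar>y\<bar>..\<bar>y\<bar>} (ellipticF k)"
        using isCont_ellipticF by (simp add: continuous_at_imp_continuous_on)
    qed simp
    then show ?thesis by blast
  qed
  show "\<phi> = \<psi>" if "ellipticF k \<phi> = y" "ellipticF k \<psi> = y" for \<phi> \<psi>
    using ellipticF_less[of \<phi> \<psi>] ellipticF_less[of \<psi> \<phi>] that
    by (cases "\<phi> < \<psi>"; cases "\<psi> < \<phi>") auto
qed

lemma ellipticF_jacobi_am: "ellipticF k (jacobi_am k y) = y"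
  unfolding jacobi_am_def by (rule theI'[OF ex1_ellipticF_eq])

lemma jacobi_am_ellipticF: "jacobi_am k (ellipticF k \<phi>) = \<phi>"
  using ex1_ellipticF_eq[of "ellipticF k \<phi>"] ellipticF_jacobi_am[of "ellipticF k \<phi>"] by blast

lemma has_real_derivative_jacobi_am:
  "(jacobi_am k has_real_derivative sqrt (1 - k\<^sup>2 * (sin (jacobi_am k y))\<^sup>2)) (at y)"
proof -
  have "isCont (jacobi_am k) (ellipticF k (jacobi_am k y))"
    by (rule isCont_inverse_function[where d=1]) (auto simp: jacobi_am_ellipticF isCont_ellipticF)
  then have cont: "isCont (jacobi_am k) y"
    by (simp add: ellipticF_jacobi_am)
  have "(jacobi_am k has_real_derivative inverse (elliptic_integrand k (jacobi_am k y))) (at y)"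
    by (rule DERIV_inverse_function[where a="y - 1" and b="y + 1"])
      (use has_real_derivative_ellipticF elliptic_integrand_ge_1[of "jacobi_am k y"] cont in
        \<open>auto simp: ellipticF_jacobi_am\<close>)
  then show ?thesis
    by (simp add: elliptic_integrand_def)
qed

end

text \<open>The constraints on \<open>a\<close> and \<open>b\<close> come from \<open>sn'' = 2 k\<^sup>2 sn\<^sup>3 - (1 + k\<^sup>2) sn\<close>.\<close>
lemma bounded_wave_profile_jacobi_sn:
  fixes a b k :: real
  assumes k: "k\<^sup>2 < 1" and hb: "b\<^sup>2 * (1 + k\<^sup>2) = 1" and hk: "2 * b\<^sup>2 * k\<^sup>2 = a\<^sup>2"
  shows "bounded_wave_profile (\<lambda>x. a * jacobi_sn k (x * b))
    (\<lambda>x. a * b * (cos (jacobi_am k (x * b)) * sqrt (1 - k\<^sup>2 * (sin (jacobi_am k (x * b)))\<^sup>2)))"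
proof -
  define am where "am = jacobi_am k"
  define dn where "dn y = sqrt (1 - k\<^sup>2 * (sin (am y))\<^sup>2)" for y
  have pos: "0 < 1 - k\<^sup>2 * (sin (am y))\<^sup>2" for y
    by (rule elliptic_radicand_pos[OF k])
  have dn_sq: "(dn y)\<^sup>2 = 1 - k\<^sup>2 * (sin (am y))\<^sup>2" for y
    using pos[of y] by (simp add: dn_def)
  have dn_bound: "0 \<le> dn y" "dn y \<le> 1" for y
    using pos[of y] by (auto simp: dn_def)
  have dam: "(am has_real_derivative dn y) (at y)" for y
    unfolding am_def dn_def by (rule has_real_derivative_jacobi_am[OF k])
  have dsn: "((\<lambda>y. sin (am y)) has_real_derivative cos (am y) * dn y) (at y)" for y
    using DERIV_chain2[OF DERIV_sin dam] by simp
  have dcn: "((\<lambda>y. cos (am y)) has_real_derivative - sin (am y) * dn y) (at y)" for y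
    using DERIV_chain2[OF DERIV_cos dam] by simp
  have ddn: "(dn has_real_derivative - k\<^sup>2 * sin (am y) * cos (am y)) (at y)" for y
  proof -
    note d = DERIV_chain2[OF DERIV_real_sqrt[OF pos[of y]]
        DERIV_diff[OF DERIV_const[where k=1] DERIV_cmult[OF DERIV_power[OF dsn[of y], where n=2], where c="k\<^sup>2"]]]
    have dn: "sqrt (1 - k\<^sup>2 * (sin (am y))\<^sup>2) = dn y" and "dn y \<noteq> 0"
      using pos[of y] by (simp_all add: dn_def)
    then show ?thesis
      unfolding dn_def[abs_def] by (intro DERIV_cong[OF d]) (simp add: dn field_simps)
  qed
  have gb: "((\<lambda>x. x * b) has_real_derivative b) (at x)" for x
    using DERIV_cmult_right[OF DERIV_ident, where c=b] by simp
  have du: "((\<lambda>x. a * sin (am (x * b))) has_real_derivative a * b * (cos (am (x * b)) * dn (x * b))) (at x)" for x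
    by (rule DERIV_cong[OF DERIV_cmult[OF DERIV_chain2[OF dsn gb], where c=a]]) (simp add: algebra_simps)
  have du': "((\<lambda>x. a * b * (cos (am (x * b)) * dn (x * b))) has_real_derivative
      ((a * sin (am (x * b)))\<^sup>2 - 1) * (a * sin (am (x * b)))) (at x)" for x
  proof (rule DERIV_cong[OF DERIV_cmult[OF DERIV_chain2[OF DERIV_mult[OF dcn ddn] gb], where c="a * b"]])
    have "(sin (am (x * b)))\<^sup>2 + (cos (am (x * b)))\<^sup>2 = 1"
      by simp
    then show "a * b * ((- sin (am (x * b)) * dn (x * b) * dn (x * b) +
          - k\<^sup>2 * sin (am (x * b)) * cos (am (x * b)) * cos (am (x * b))) * b) =
        ((a * sin (am (x * b)))\<^sup>2 - 1) * (a * sin (am (x * b)))"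
      using dn_sq[of "x * b"] hb hk by algebra
  qed
  have "\<bar>a * sin (am (x * b))\<bar> \<le> \<bar>a\<bar>" for x
    by (simp add: abs_mult mult_left_le)
  then have "bounded (range (\<lambda>x. a * sin (am (x * b))))"
    by (intro boundedI[of _ "\<bar>a\<bar>"]) auto
  have "\<bar>a * b * (cos (am (x * b)) * dn (x * b))\<bar> \<le> \<bar>a * b\<bar>" for x
    using dn_bound[of "x * b"] by (simp add: abs_mult mult_left_le mult_le_one)
  then have "bounded (range (\<lambda>x. a * b * (cos (am (x * b)) * dn (x * b))))"
    by (intro boundedI[of _ "\<bar>a * b\<bar>"]) auto
  with \<open>bounded (range (\<lambda>x. a * sin (am (x * b))))\<close> du du' show ?thesis
    by (simp add: bounded_wave_profile_def jacobi_sn_def am_def dn_def)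
qed

lemma bounded_wave_profile_u0:
  assumes "0 \<le> E" "E \<le> 1"
  obtains u' where "bounded_wave_profile (u0 E) u'"
proof -
  consider "E = 0" | "E = 1" | "0 < E" "E < 1"
    using assms by linarith
  then show ?thesis
  proof cases
    case 1
    then show ?thesis
      using that bounded_wave_profile_tanh by (simp add: u0_def[abs_def])
  next
    case 2
    have "bounded_wave_profile (\<lambda>x. 0) (\<lambda>x. 0)"
      by (simp add: bounded_wave_profile_def)
    with 2 show ?thesis
      using that by (simp add: u0_def[abs_def])
  next
    case 3
    define a where "a = sqrt (1 - E)"
    define b where "b = sqrt ((1 + E) / 2)"
    define k where "k = sqrt ((1 - E) / (1 + E))"
    have u0: "u0 E = (\<lambda>x. a * jacobi_sn k (x * b))"
      using 3 by (auto simp: u0_def[abs_def] a_def b_def k_def)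
    have k2: "k\<^sup>2 = (1 - E) / (1 + E)" and b2: "b\<^sup>2 = (1 + E) / 2" and a2: "a\<^sup>2 = 1 - E"
      using 3 by (simp_all add: k_def b_def a_def)
    have "k\<^sup>2 < 1" "b\<^sup>2 * (1 + k\<^sup>2) = 1" "2 * b\<^sup>2 * k\<^sup>2 = a\<^sup>2"
      using 3 unfolding k2 b2 a2 by (simp_all add: field_simps)
    then have "bounded_wave_profile (u0 E)
      (\<lambda>x. a * b * (cos (jacobi_am k (x * b)) * sqrt (1 - k\<^sup>2 * (sin (jacobi_am k (x * b)))\<^sup>2)))"
      unfolding u0 by (rule bounded_wave_profile_jacobi_sn)
    then show ?thesis
      by (rule that)
  qed
qed

theorem lemma4p1:
  fixes E :: real and v v1 v2 :: "real \<Rightarrow> real"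
  assumes "0 \<le> E" and "E \<le> 1"
    and "H2_with_derivs v v1 v2"
  shows "(\<integral>x. (v2 x)\<^sup>2 + 3 * (u0 E x)\<^sup>2 * (v1 x)\<^sup>2 + ((u0 E x)\<^sup>2 - 1) * (v x)\<^sup>2 \<partial>lborel)
         - 2 * (\<integral>x. (v1 x)\<^sup>2 + ((u0 E x)\<^sup>2 - 1) * (v x)\<^sup>2 \<partial>lborel)
       = (\<integral>x. (- v2 x + ((u0 E x)\<^sup>2 - 1) * v x)\<^sup>2 \<partial>lborel)
         + (\<integral>x. (u0 E x * v1 x - deriv (u0 E) x * v x)\<^sup>2 \<partial>lborel)"
proof -
  obtain u' where u': "bounded_wave_profile (u0 E) u'"
    using bounded_wave_profile_u0[OF assms(1,2)] .
  then have "deriv (u0 E) = u'"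
    by (intro ext DERIV_imp_deriv) (simp add: bounded_wave_profile_def)
  then show ?thesis
    using quadratic_form_K_minus_2_eq[OF u' assms(3)] by simp
qed

end
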